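(* Run the mechanism BFM-SWM described in the context with arbitrary $B>0$, $\alpha>1$, $\beta>1$, $\epsilon>0$, $\ell\in\{1,2\}$, with all sellers behaving truthfully, and let $M$, $\rho_M$, $S^*$ be as defined in the context. If $M\ge 2$, then $$\rho_M\ \le\ 2\alpha\big(v(S^* )-p(S^* )\big).$$
   Context: Setting. $\mathcal{N}$ is a finite set of $n$ sellers. The valuation $v:2^{\mathcal{N}}\to\mathbb{R}_{\ge 0}$ satisfies $v(\emptyset)=0$ and is submodular (for $X\subseteq Y\subseteq\mathcal{N}$ and $u\notin Y$, $v(u\mid Y)\le v(u\mid X)$), not necessarily monotone, where $v(S\mid T)=v(S\cup T)-v(T)$, $v(u\mid T)=v(\{u\}\mid T)$. Each seller $u$ has a private cost $c(u)\ge 0$; $c(X)=\sum_{u\in X}c(u)$, $p(X)=\sum_{u\in X}p(u)$. $B>0$ is the budget, $[\ell]=\{1,\dots,\ell\}$. Sellers behave truthfully: a seller $u$ offered price $q$ accepts iff $c(u)\le q$. Mechanism BFM-SWM (inputs $B$, $\alpha>1$, $\beta>1$, $\epsilon>0$, $\ell\in\{1,2\}$): 1. Offer every seller the price $B$; let $R$ be the set of sellers who accept, and set $p(u)=B$ for $u\in R$. 2. Set $t=0$, $\rho_0=\epsilon/\alpha$, $u^*=\emptyset$ ($u^*$ is a set of at most one seller), and $S_{i,0}=\emptyset$ for $i\in[\ell]$. 3. Repeat rounds: set $t\leftarrow t+1$, $\rho_t=\alpha\rho_{t-1}$, $S_{i,t}=\emptyset$ for all $i\in[\ell]$. Process the sellers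 $u\in R\setminus(\bigcup_{i=1}^{\ell}S_{i,t-1}\cup u^* )$ one at a time in a fixed order. For each such $u$: pick $j\in\arg\max_{i\in[\ell]}v(u\mid S_{i,t})$ (current contents); update $p(u)\leftarrow\min\{p(u),\ v(u\mid S_{j,t})/(\beta+\rho_t/B)\}$ and offer $p(u)$ to $u$. If $u$ accepts: if $v(S_{j,t}\cup\{u\})-p(S_{j,t}\cup\{u\})>\rho_t$ (current prices), set $u^*\leftarrow\{u\}$ and end the round immediately; otherwise add $u$ to $S_{j,t}$. If $u$ rejects, remove $u$ from $R$. After the round, stop if $R\setminus\left(\bigcup_{i=1}^{\ell}(S_{i,t-1}\cup S_{i,t})\cup u^*\right)=\emptyset$; otherwise start another round. 4. Let $M$ be the final value of $t$ (the number of rounds). Output $S^*\in\arg\max_{A\in\{S_{i,t}: i\in[\ell],\ t\in\{M-1,M\}\}\cup\{u^*\}}\big(v(A)-p(A)\big)$, paying each $u\in S^*$ its current price $p(u)$; $p(S^* )$ is the total payment. *)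

theory Defs
  imports Complex_Main
begin

definition marg :: "('a set \<Rightarrow> real) \<Rightarrow> 'a \<Rightarrow> 'a set \<Rightarrow> real" where
  "marg v u S = v (insert u S) - v S"

definition submod_on :: "'a set \<Rightarrow> ('a set \<Rightarrow> real) \<Rightarrow> bool" where
  "submod_on N v \<longleftrightarrow> (\<forall>X Y u. X \<subseteq> Y \<longrightarrow> Y \<subseteq> N \<longrightarrow> u \<in> N \<longrightarrow> u \<notin> Y \<longrightarrow>
       marg v u Y \<le> marg v u X)"

definition rho :: "real \<Rightarrow> real \<Rightarrow> nat \<Rightarrow> real" where
  "rho \<alpha> \<epsilon> t = (\<epsilon> / \<alpha>) * \<alpha> ^ t"

definition argmax_rule :: "nat \<Rightarrow> ('a set \<Rightarrow> real) \<Rightarrow> (nat \<Rightarrow> 'a \<Rightarrow> (nat \<Rightarrow> 'a set) \<Rightarrow> nat) \<Rightarrow> bool" where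
  "argmax_rule l v ch \<longleftrightarrow> (\<forall>t u S. ch t u S \<in> {1..l} \<and>
       (\<forall>i\<in>{1..l}. marg v u (S i) \<le> marg v u (S (ch t u S))))"

text \<open>In-round state: (current sets S_{i,t}, prices, R, u*, round-ended flag).\<close>
type_synonym 'a rstate = "(nat \<Rightarrow> 'a set) \<times> ('a \<Rightarrow> real) \<times> 'a set \<times> 'a set \<times> bool"

definition seller_step ::
  "('a set \<Rightarrow> real) \<Rightarrow> ('a \<Rightarrow> real) \<Rightarrow> real \<Rightarrow> real \<Rightarrow> real \<Rightarrow>
   (nat \<Rightarrow> 'a \<Rightarrow> (nat \<Rightarrow> 'a set) \<Rightarrow> nat) \<Rightarrow> nat \<Rightarrow> 'a \<Rightarrow> 'a rstate \<Rightarrow> 'a rstate" where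
  "seller_step v c B \<beta> r ch t u st =
    (case st of (S, p, R, us, ended) \<Rightarrow>
      if ended then st else
      (let j = ch t u S;
           q = min (p u) (marg v u (S j) / (\<beta> + r / B));
           p' = p(u := q)
       in if c u \<le> q then
            (if v (insert u (S j)) - sum p' (insert u (S j)) > r
             then (S, p', R, {u}, True)
             else (S(j := insert u (S j)), p', R, us, False))
          else (S, p', R - {u}, us, False)))"

text \<open>Global state after round t: (S_{.,t-1}, S_{.,t}, prices, R, u*).\<close>
type_synonym 'a gstate = "(nat \<Rightarrow> 'a set) \<times> (nat \<Rightarrow> 'a set) \<times> ('a \<Rightarrow> real) \<times> 'a set \<times> 'a set"

definition do_round ::
  "'a list \<Rightarrow> nat \<Rightarrow> ('a set \<Rightarrow> real) \<Rightarrow> ('a \<Rightarrow> real) \<Rightarrow> real \<Rightarrow> real \<Rightarrow> real \<Rightarrow> real \<Rightarrow>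
   (nat \<Rightarrow> 'a \<Rightarrow> (nat \<Rightarrow> 'a set) \<Rightarrow> nat) \<Rightarrow> nat \<Rightarrow> 'a gstate \<Rightarrow> 'a gstate" where
  "do_round ord l v c B \<alpha> \<beta> \<epsilon> ch t g =
    (case g of (Sprev, S, p, R, us) \<Rightarrow>
      let cand = filter (\<lambda>u. u \<in> R \<and> u \<notin> (\<Union>i\<in>{1..l}. S i) \<and> u \<notin> us) ord;
          (S', p', R', us', _) =
             fold (seller_step v c B \<beta> (rho \<alpha> \<epsilon> t) ch t) cand
                  ((\<lambda>_. {}), p, R, us, False)
      in (S, S', p', R', us'))"

text \<open>State after t rounds (t = 0: after steps 1 and 2).\<close>
primrec run ::
  "'a list \<Rightarrow> nat \<Rightarrow> ('a set \<Rightarrow> real) \<Rightarrow> ('a \<Rightarrow> real) \<Rightarrow> real \<Rightarrow> real \<Rightarrow> real \<Rightarrow> real \<Rightarrow>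
   (nat \<Rightarrow> 'a \<Rightarrow> (nat \<Rightarrow> 'a set) \<Rightarrow> nat) \<Rightarrow> nat \<Rightarrow> 'a gstate" where
  "run ord l v c B \<alpha> \<beta> \<epsilon> ch 0 =
     ((\<lambda>_. {}), (\<lambda>_. {}), (\<lambda>_. B), {u \<in> set ord. c u \<le> B}, {})"
| "run ord l v c B \<alpha> \<beta> \<epsilon> ch (Suc t) =
     do_round ord l v c B \<alpha> \<beta> \<epsilon> ch (Suc t) (run ord l v c B \<alpha> \<beta> \<epsilon> ch t)"

definition stops :: "nat \<Rightarrow> 'a gstate \<Rightarrow> bool" where
  "stops l g = (case g of (Sprev, S, p, R, us) \<Rightarrow>
      R - ((\<Union>i\<in>{1..l}. Sprev i \<union> S i) \<union> us) = {})"

definition candidates :: "nat \<Rightarrow> 'a gstate \<Rightarrow> 'a set set" where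
  "candidates l g = (case g of (Sprev, S, p, R, us) \<Rightarrow>
      Sprev ` {1..l} \<union> S ` {1..l} \<union> {us})"

definition final_prices :: "'a gstate \<Rightarrow> 'a \<Rightarrow> real" where
  "final_prices g = (case g of (Sprev, S, p, R, us) \<Rightarrow> p)"

end

theory Submission
  imports Defs
begin

text \<open>
  Round M-1 did not stop. A round in which no accepted seller exceeds the threshold offers every
  remaining seller of R, each of whom is rejected or placed in some S_i, so the stopping test would
  succeed; hence round M-1 ended by setting u* = {u} with v(S_j \<union> {u}) - p(S_j \<union> {u}) > \<rho>_{M-1}.
  Submodularity gives v(T \<union> {u}) \<le> v(T) + v({u}), so S_j or {u} has surplus at least \<rho>_{M-1}/2.
  Prices only decrease, so this survives round M unless round M sets a new u*, in which case the
  same splitting applies with the larger threshold \<rho>_M. Either way some candidate, hence S*, has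
  surplus at least \<rho>_{M-1}/2 = \<rho>_M/(2\<alpha>).
\<close>

lemma submod_insert_le:
  assumes "submod_on N v" "v {} = 0" "u \<in> N" "T \<subseteq> N" "u \<notin> T"
  shows "v (insert u T) \<le> v T + v {u}"
proof -
  have "marg v u T \<le> marg v u {}"
    using assms unfolding submod_on_def by blast
  then show ?thesis using \<open>v {} = 0\<close> by (simp add: marg_def)
qed

lemma submod_surplus_insert_halves:
  fixes v :: "'a set \<Rightarrow> real"
  assumes "submod_on N v" "v {} = 0" "u \<in> N" "T \<subseteq> N" "finite T" "0 \<le> r"
    and "r < v (insert u T) - sum p (insert u T)"
  shows "r / 2 \<le> v T - sum p T \<or> r / 2 \<le> v {u} - sum p {u}"
proof (cases "u \<in> T")
  case True
  then show ?thesis using assms(6,7) by (simp add: insert_absorb)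
next
  case False
  then have "v (insert u T) - sum p (insert u T) \<le> (v T - sum p T) + (v {u} - sum p {u})"
    using submod_insert_le[OF assms(1-4)] \<open>finite T\<close> by simp
  then show ?thesis using assms(7) by linarith
qed

lemma rho_pos: "0 < \<alpha> \<Longrightarrow> 0 < \<epsilon> \<Longrightarrow> 0 < rho \<alpha> \<epsilon> t"
  by (simp add: rho_def)

lemma rho_Suc: "rho \<alpha> \<epsilon> (Suc t) = \<alpha> * rho \<alpha> \<epsilon> t"
  by (simp add: rho_def)

locale bfm_swm =
  fixes ord :: "'a list" and l :: nat and v :: "'a set \<Rightarrow> real" and c :: "'a \<Rightarrow> real"
    and B \<alpha> \<beta> \<epsilon> :: real and ch :: "nat \<Rightarrow> 'a \<Rightarrow> (nat \<Rightarrow> 'a set) \<Rightarrow> nat"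
  assumes argmax: "argmax_rule l v ch"
begin

abbreviation process :: "real \<Rightarrow> nat \<Rightarrow> 'a \<Rightarrow> 'a rstate \<Rightarrow> 'a rstate" where
  "process r t \<equiv> seller_step v c B \<beta> r ch t"

abbreviation state :: "nat \<Rightarrow> 'a gstate" where
  "state t \<equiv> run ord l v c B \<alpha> \<beta> \<epsilon> ch t"

lemma process_cases:
  obtains (trigger) j q where "j \<in> {1..l}" "q \<le> p u"
      "r < v (insert u (S j)) - sum (p(u := q)) (insert u (S j))"
      "process r t u (S, p, R, us, False) = (S, p(u := q), R, {u}, True)"
  | (accept) j q where "j \<in> {1..l}" "q \<le> p u"
      "process r t u (S, p, R, us, False) = (S(j := insert u (S j)), p(u := q), R, us, False)"
  | (reject) q where "q \<le> p u"
      "process r t u (S, p, R, us, False) = (S, p(u := q), R - {u}, us, False)"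
proof -
  define j where "j = ch t u S"
  define q where "q = min (p u) (marg v u (S j) / (\<beta> + r / B))"
  have "j \<in> {1..l}" using argmax unfolding argmax_rule_def j_def by blast
  have q: "q \<le> p u" by (simp add: q_def)
  have step: "process r t u (S, p, R, us, False) =
      (if c u \<le> q then
         (if r < v (insert u (S j)) - sum (p(u := q)) (insert u (S j))
          then (S, p(u := q), R, {u}, True)
          else (S(j := insert u (S j)), p(u := q), R, us, False))
       else (S, p(u := q), R - {u}, us, False))"
    by (simp add: seller_step_def Let_def j_def q_def)
  consider "c u \<le> q" "r < v (insert u (S j)) - sum (p(u := q)) (insert u (S j))"
    | "c u \<le> q" "\<not> r < v (insert u (S j)) - sum (p(u := q)) (insert u (S j))"
    | "\<not> c u \<le> q"
    by blast
  then show thesis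
    using trigger[OF \<open>j \<in> {1..l}\<close> q] accept[OF \<open>j \<in> {1..l}\<close> q] reject[OF q] step
    by cases simp_all
qed

lemma process_ended [simp]: "process r t u (S, p, R, us, True) = (S, p, R, us, True)"
  by (simp add: seller_step_def)

lemma fold_process_ended [simp]:
  "fold (process r t) xs (S, p, R, us, True) = (S, p, R, us, True)"
  by (induction xs) simp_all

lemma process_mono:
  assumes "process r t u (S, p, R, us, e) = (S', p', R', us', e')"
  shows "(\<forall>y. p' y \<le> p y) \<and> R' \<subseteq> R \<and> (\<forall>i. S i \<subseteq> S' i \<and> S' i \<subseteq> insert u (S i))"
proof (cases e)
  case True
  with assms show ?thesis by auto
next
  case False
  with assms show ?thesis
    by (cases rule: process_cases[of p u r S t R us]) (auto split: if_splits)
qed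

lemma fold_process_mono:
  "fold (process r t) xs (S, p, R, us, e) = (S', p', R', us', e') \<Longrightarrow>
     (\<forall>y. p' y \<le> p y) \<and> R' \<subseteq> R \<and> (\<forall>i. S i \<subseteq> S' i \<and> S' i \<subseteq> S i \<union> set xs)"
proof (induction xs arbitrary: S p R us e)
  case Nil
  then show ?case by simp
next
  case (Cons x xs)
  obtain S1 p1 R1 us1 e1 where step: "process r t x (S, p, R, us, e) = (S1, p1, R1, us1, e1)"
    by (metis prod_cases5)
  with Cons.prems have "fold (process r t) xs (S1, p1, R1, us1, e1) = (S', p', R', us', e')"
    by simp
  note later = Cons.IH[OF this] and first = process_mono[OF step]
  have "\<forall>y. p' y \<le> p y" using later first by (meson order_trans)
  moreover have "R' \<subseteq> R" using later first by blast
  moreover have "\<forall>i. S i \<subseteq> S' i \<and> S' i \<subseteq> S i \<union> set (x # xs)"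
    using later first by simp blast
  ultimately show ?case by blast
qed

lemma fold_process_trigger:
  "fold (process r t) xs (S, p, R, us, False) = (S', p', R', us', True) \<Longrightarrow>
     \<exists>u\<in>set xs. us' = {u} \<and> (\<exists>j\<in>{1..l}. r < v (insert u (S' j)) - sum p' (insert u (S' j)))"
proof (induction xs arbitrary: S p R us)
  case Nil
  then show ?case by simp
next
  case (Cons x xs)
  show ?case
  proof (cases rule: process_cases[of p x r S t R us])
    case (trigger j q)
    with Cons.prems show ?thesis by auto
  next
    case (accept j q)
    with Cons.prems
    have "fold (process r t) xs (S(j := insert x (S j)), p(x := q), R, us, False) = (S', p', R', us', True)"
      by simp
    from Cons.IH[OF this] show ?thesis by auto
  next
    case (reject q)
    with Cons.prems
    have "fold (process r t) xs (S, p(x := q), R - {x}, us, False) = (S', p', R', us', True)"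
      by simp
    from Cons.IH[OF this] show ?thesis by auto
  qed
qed

lemma fold_process_exhaust:
  "fold (process r t) xs (S, p, R, us, e) = (S', p', R', us', False) \<Longrightarrow>
     \<not> e \<and> us' = us \<and> (\<forall>x\<in>set xs. x \<in> R' \<longrightarrow> (\<exists>i\<in>{1..l}. x \<in> S' i))"
proof (induction xs arbitrary: S p R us e)
  case Nil
  then show ?case by simp
next
  case (Cons x xs)
  show ?case
  proof (cases e)
    case True
    with Cons.prems show ?thesis by simp
  next
    case False
    then show ?thesis
    proof (cases rule: process_cases[of p x r S t R us])
      case (trigger j q)
      with Cons.prems False show ?thesis by simp
    next
      case (accept j q)
      with Cons.prems False
      have rest: "fold (process r t) xs (S(j := insert x (S j)), p(x := q), R, us, False) = (S', p', R', us', False)"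
        by simp
      have "x \<in> S' j" using fold_process_mono[OF rest] by (metis fun_upd_same insert_subset)
      with Cons.IH[OF rest] accept(1) False show ?thesis by auto
    next
      case (reject q)
      with Cons.prems False
      have rest: "fold (process r t) xs (S, p(x := q), R - {x}, us, False) = (S', p', R', us', False)"
        by simp
      have "x \<notin> R'" using fold_process_mono[OF rest] by blast
      with Cons.IH[OF rest] False show ?thesis by auto
    qed
  qed
qed

lemma round_fold:
  assumes before: "state t = (Sp, S, p, R, us)" and after: "state (Suc t) = (S0, S', p', R', us')"
  obtains cand e where "S0 = S"
    "set cand = {u \<in> set ord. u \<in> R \<and> u \<notin> (\<Union>i\<in>{1..l}. S i) \<and> u \<notin> us}"
    "fold (process (rho \<alpha> \<epsilon> (Suc t)) (Suc t)) cand ((\<lambda>_. {}), p, R, us, False) = (S', p', R', us', e)"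
proof -
  define cand where "cand = filter (\<lambda>u. u \<in> R \<and> u \<notin> (\<Union>i\<in>{1..l}. S i) \<and> u \<notin> us) ord"
  obtain S'' p'' R'' us'' e where round:
    "fold (process (rho \<alpha> \<epsilon> (Suc t)) (Suc t)) cand ((\<lambda>_. {}), p, R, us, False) = (S'', p'', R'', us'', e)"
    by (metis prod_cases5)
  have "state (Suc t) = (S, S'', p'', R'', us'')"
    using before round by (simp add: do_round_def Let_def cand_def)
  with after have "S0 = S" and "(S'', p'', R'', us'') = (S', p', R', us')"
    by (simp_all del: run.simps)
  moreover have "set cand = {u \<in> set ord. u \<in> R \<and> u \<notin> (\<Union>i\<in>{1..l}. S i) \<and> u \<notin> us}"
    by (auto simp: cand_def)
  ultimately show thesis using round by (intro that) simp_all
qed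

lemma state_R_subset: "state t = (Sp, S, p, R, us) \<Longrightarrow> R \<subseteq> set ord"
proof (induction t arbitrary: Sp S p R us)
  case 0
  then show ?case by auto
next
  case (Suc t)
  obtain Sp0 S0 p0 R0 us0 where before: "state t = (Sp0, S0, p0, R0, us0)"
    by (metis prod_cases5)
  show ?case
  proof (rule round_fold[OF before Suc.prems])
    fix cand e
    assume "fold (process (rho \<alpha> \<epsilon> (Suc t)) (Suc t)) cand ((\<lambda>_. {}), p0, R0, us0, False)
      = (S, p, R, us, e)"
    with fold_process_mono Suc.IH[OF before] show ?thesis by blast
  qed
qed

lemma round_prices_le:
  assumes "state t = (Sp, S, p, R, us)" and "state (Suc t) = (S0, S', p', R', us')"
  shows "p' y \<le> p y"
proof (rule round_fold[OF assms])
  fix cand e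
  assume "fold (process (rho \<alpha> \<epsilon> (Suc t)) (Suc t)) cand ((\<lambda>_. {}), p, R, us, False)
    = (S', p', R', us', e)"
  from fold_process_mono[OF this] show ?thesis by blast
qed

lemma round_cases:
  assumes before: "state t = (Sp, S, p, R, us)" and after: "state (Suc t) = (S0, S', p', R', us')"
  obtains (trigger) u j where "us' = {u}" "u \<in> set ord" "j \<in> {1..l}" "S' j \<subseteq> set ord"
      "rho \<alpha> \<epsilon> (Suc t) < v (insert u (S' j)) - sum p' (insert u (S' j))"
  | (exhausted) "us' = us" "stops l (state (Suc t))"
proof -
  obtain cand e where "S0 = S"
    and cand: "set cand = {u \<in> set ord. u \<in> R \<and> u \<notin> (\<Union>i\<in>{1..l}. S i) \<and> u \<notin> us}"
    and round: "fold (process (rho \<alpha> \<epsilon> (Suc t)) (Suc t)) cand ((\<lambda>_. {}), p, R, us, False)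
      = (S', p', R', us', e)"
    using round_fold[OF before after] .
  show thesis
  proof (cases e)
    case True
    with round have "fold (process (rho \<alpha> \<epsilon> (Suc t)) (Suc t)) cand ((\<lambda>_. {}), p, R, us, False)
      = (S', p', R', us', True)" by simp
    then obtain u j where "u \<in> set cand" "us' = {u}" "j \<in> {1..l}"
      "rho \<alpha> \<epsilon> (Suc t) < v (insert u (S' j)) - sum p' (insert u (S' j))"
      using fold_process_trigger by blast
    moreover have "S' j \<subseteq> set ord"
      using fold_process_mono[OF round] cand by blast
    ultimately show thesis using trigger cand by blast
  next
    case False
    with round have "fold (process (rho \<alpha> \<epsilon> (Suc t)) (Suc t)) cand ((\<lambda>_. {}), p, R, us, False)
      = (S', p', R', us', False)" by simp
    then have exhaust: "us' = us" "\<forall>x\<in>set cand. x \<in> R' \<longrightarrow> (\<exists>i\<in>{1..l}. x \<in> S' i)"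
      using fold_process_exhaust by blast+
    have "R' \<subseteq> set ord" using state_R_subset[OF after] .
    then have "R' - ((\<Union>i\<in>{1..l}. S i \<union> S' i) \<union> us') = {}"
      using exhaust cand fold_process_mono[OF round] by auto
    then have "stops l (state (Suc t))"
      unfolding after stops_def using \<open>S0 = S\<close> by simp
    with exhaust(1) show thesis by (rule exhausted)
  qed
qed

lemma last_round_surplus:
  assumes "submod_on (set ord) v" "v {} = 0" "1 < \<alpha>" "0 < \<epsilon>"
    and "\<not> stops l (state (Suc k))"
  shows "\<exists>A \<in> candidates l (state (Suc (Suc k))).
           rho \<alpha> \<epsilon> (Suc k) / 2 \<le> v A - sum (final_prices (state (Suc (Suc k)))) A"
proof -
  obtain Sp S p R us where s0: "state k = (Sp, S, p, R, us)"
    by (metis prod_cases5)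
  obtain S0 S1 p1 R1 us1 where s1: "state (Suc k) = (S0, S1, p1, R1, us1)"
    by (metis prod_cases5)
  obtain S1' S2 p2 R2 us2 where s2: "state (Suc (Suc k)) = (S1', S2, p2, R2, us2)"
    by (metis prod_cases5)
  have "S1' = S1" by (rule round_fold[OF s1 s2])
  then have candidates: "candidates l (state (Suc (Suc k))) = S1 ` {1..l} \<union> S2 ` {1..l} \<union> {us2}"
    unfolding s2 candidates_def by simp
  have prices: "final_prices (state (Suc (Suc k))) = p2"
    unfolding s2 final_prices_def by simp
  have "0 < rho \<alpha> \<epsilon> (Suc k)" using assms(3,4) by (simp add: rho_pos)
  obtain u j where u: "us1 = {u}" "u \<in> set ord" "j \<in> {1..l}" "S1 j \<subseteq> set ord"
    "rho \<alpha> \<epsilon> (Suc k) < v (insert u (S1 j)) - sum p1 (insert u (S1 j))"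
  using s0 s1 proof (cases rule: round_cases)
    case (trigger u j)
    then show thesis by (rule that)
  next
    case exhausted
    with assms(5) show thesis by blast
  qed
  from s1 s2 show ?thesis
  proof (cases rule: round_cases)
    case (trigger u' j')
    have "rho \<alpha> \<epsilon> (Suc k) < rho \<alpha> \<epsilon> (Suc (Suc k))"
      using \<open>0 < rho \<alpha> \<epsilon> (Suc k)\<close> assms(3) by (simp add: rho_Suc[of _ _ "Suc k"])
    with trigger(5) have "rho \<alpha> \<epsilon> (Suc k) < v (insert u' (S2 j')) - sum p2 (insert u' (S2 j'))"
      by linarith
    with assms(1,2) trigger(2,4) finite_subset[OF trigger(4)] \<open>0 < rho \<alpha> \<epsilon> (Suc k)\<close>
    have "rho \<alpha> \<epsilon> (Suc k) / 2 \<le> v (S2 j') - sum p2 (S2 j') \<or>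
          rho \<alpha> \<epsilon> (Suc k) / 2 \<le> v {u'} - sum p2 {u'}"
      by (intro submod_surplus_insert_halves) auto
    moreover have "S2 j' \<in> candidates l (state (Suc (Suc k)))" "{u'} \<in> candidates l (state (Suc (Suc k)))"
      using candidates trigger(1,3) by auto
    ultimately show ?thesis unfolding prices by blast
  next
    case exhausted
    with assms(1,2) u(2,4) finite_subset[OF u(4)] \<open>0 < rho \<alpha> \<epsilon> (Suc k)\<close> u(5)
    have "rho \<alpha> \<epsilon> (Suc k) / 2 \<le> v (S1 j) - sum p1 (S1 j) \<or>
          rho \<alpha> \<epsilon> (Suc k) / 2 \<le> v {u} - sum p1 {u}"
      by (intro submod_surplus_insert_halves) auto
    moreover have "v A - sum p1 A \<le> v A - sum p2 A" for A
      using round_prices_le[OF s1 s2] by (simp add: sum_mono)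
    moreover have "S1 j \<in> candidates l (state (Suc (Suc k)))" "{u} \<in> candidates l (state (Suc (Suc k)))"
      using candidates exhausted(1) u(1,3) by auto
    ultimately show ?thesis unfolding prices by (meson order_trans)
  qed
qed

end

theorem lemma4p5:
  fixes ord :: "'a list" and v :: "'a set \<Rightarrow> real" and c :: "'a \<Rightarrow> real"
    and B \<alpha> \<beta> \<epsilon> :: real and l M :: nat
    and ch :: "nat \<Rightarrow> 'a \<Rightarrow> (nat \<Rightarrow> 'a set) \<Rightarrow> nat" and Sstar :: "'a set"
  assumes "distinct ord"
    and "v {} = 0" and "\<forall>X. X \<subseteq> set ord \<longrightarrow> v X \<ge> 0" and "submod_on (set ord) v"
    and "\<forall>u\<in>set ord. c u \<ge> 0"
    and "B > 0" and "\<alpha> > 1" and "\<beta> > 1" and "\<epsilon> > 0" and "l \<in> {1, 2}"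
    and "argmax_rule l v ch"
    and "M \<ge> 1" and "stops l (run ord l v c B \<alpha> \<beta> \<epsilon> ch M)"
    and "\<forall>t. 1 \<le> t \<and> t < M \<longrightarrow> \<not> stops l (run ord l v c B \<alpha> \<beta> \<epsilon> ch t)"
    and "M \<ge> 2"
    and "Sstar \<in> candidates l (run ord l v c B \<alpha> \<beta> \<epsilon> ch M)"
    and "\<forall>A \<in> candidates l (run ord l v c B \<alpha> \<beta> \<epsilon> ch M).
           v A - sum (final_prices (run ord l v c B \<alpha> \<beta> \<epsilon> ch M)) A
           \<le> v Sstar - sum (final_prices (run ord l v c B \<alpha> \<beta> \<epsilon> ch M)) Sstar"
  shows "rho \<alpha> \<epsilon> M \<le> 2 * \<alpha> * (v Sstar - sum (final_prices (run ord l v c B \<alpha> \<beta> \<epsilon> ch M)) Sstar)"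
proof -
  interpret bfm_swm ord l v c B \<alpha> \<beta> \<epsilon> ch
    using assms(11) by (rule bfm_swm.intro)
  obtain k where M: "M = Suc (Suc k)"
    using \<open>M \<ge> 2\<close> by (metis add_2_eq_Suc le_Suc_ex)
  have "\<not> stops l (state (Suc k))"
    using assms(14) M by (simp del: run.simps)
  then obtain A where "A \<in> candidates l (state M)"
    and A: "rho \<alpha> \<epsilon> (Suc k) / 2 \<le> v A - sum (final_prices (state M)) A"
    using last_round_surplus[OF assms(4,2,7,9)] unfolding M by blast
  with assms(17) have "rho \<alpha> \<epsilon> (Suc k) / 2 \<le> v Sstar - sum (final_prices (state M)) Sstar"
    by (meson order_trans)
  with \<open>\<alpha> > 1\<close> show ?thesis
    unfolding M rho_Suc[of _ _ "Suc k"] by (simp add: mult.assoc)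
qed

end
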